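(* Let $h:\mathbb R\to\mathbb R$ be twice differentiable and satisfy: (i) $h''$ has finitely many zeros $\xi_1,\dots,\xi_n$, each of order at most $q_1>0$. That is, for each $k$ there are $a_k>0$ and a neighborhood of $\xi_k$ on which $|h''(\xi)|\ge a_k|\xi-\xi_k|^{q_1}$. (ii) There are constants $C_1,C_2>0$ and $q_2\ge0$ such that $|h''(\xi)|\ge C_2|\xi|^{q_2}$ whenever $|\xi|\ge C_1$. Then there is a constant $C$ such that the (improper) integral satisfies $$\Big|\int_{\mathbb R}e^{ith(\xi)}\,d\xi\Big|\le Ct^{-1/(2+q_2)}\quad (0<t<1),\qquad \Big|\int_{\mathbb R}e^{ith(\xi)}\,d\xi\Big|\le Ct^{-1/(2+q_1)}\quad (t\ge1).$$ *)

theory Defs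
  imports "HOL-Analysis.Analysis"
begin

definition improper_integral_R :: "(real \<Rightarrow> complex) \<Rightarrow> complex \<Rightarrow> bool" where
  "improper_integral_R f L \<longleftrightarrow>
     (\<forall>a b. f integrable_on {a..b}) \<and>
     ((\<lambda>(a, b). integral {a..b} f) \<longlongrightarrow> L) (at_bot \<times>\<^sub>F at_top)"

end

theory Submission
  imports Defs
begin

text \<open>
  On an interval where \<open>h''\<close> has a constant sign, \<open>h'\<close> is monotone; van der
  Corput's first-derivative lemma bounds the integral by \<open>8/(t\<delta>)\<close> away from the
  sublevel set \<open>{|h'| \<le> \<delta>}\<close>, and the sublevel set itself contributes at most its length.
  Cutting an arbitrary interval at the zeros of \<open>h''\<close> gives a bound
  \<open>(#zeros + 1)(8/(t\<delta>) + L(\<delta>))\<close>, where \<open>L(\<delta>)\<close> bounds the length of sublevel intervals.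
  The hypotheses give \<open>L(\<delta>) = O(\<delta>\<^sup>1\<^sup>/\<^sup>(\<^sup>1\<^sup>+\<^sup>q\<^sup>1\<^sup>))\<close> for \<open>\<delta> \<le> 1\<close> (local lower bounds for \<open>|h'|\<close> near
  its zeros, made uniform by compactness) and \<open>L(\<delta>) = O(\<delta>\<^sup>1\<^sup>/\<^sup>(\<^sup>1\<^sup>+\<^sup>q\<^sup>2\<^sup>))\<close> for \<open>\<delta> \<ge> 1\<close> (growth of
  \<open>h'\<close> at infinity).  Choosing \<open>\<delta> = t\<^sup>-\<^sup>(\<^sup>1\<^sup>+\<^sup>q\<^sup>)\<^sup>/\<^sup>(\<^sup>2\<^sup>+\<^sup>q\<^sup>)\<close> balances the two terms.  Finally the
  improper integral exists because far-out pieces are small by van der Corput, and it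
  inherits the uniform bound.
\<close>

text \<open>Darboux's theorem in the form needed here: a derivative that is positive at
  \<open>u\<close> and negative at \<open>v > u\<close> vanishes in between (at an interior maximum of \<open>f\<close>).\<close>
lemma darboux_zero:
  fixes f f' :: "real \<Rightarrow> real"
  assumes d: "\<And>x. (f has_real_derivative f' x) (at x)" and uv: "u < v"
    and fu: "f' u > 0" and fv: "f' v < 0"
  shows "\<exists>w. u < w \<and> w < v \<and> f' w = 0"
proof -
  have cont: "continuous_on {u..v} f"
    by (rule DERIV_continuous_on[OF has_field_derivative_at_within[OF d]])
  obtain w where w: "w \<in> {u..v}" and max: "\<forall>y\<in>{u..v}. f y \<le> f w"
    using continuous_attains_sup[OF compact_Icc _ cont] uv by auto
  obtain e1 where e1: "e1 > 0" "\<And>s. 0 < s \<Longrightarrow> s < e1 \<Longrightarrow> f u < f (u + s)"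
    using DERIV_pos_inc_right[OF d fu] by auto
  obtain e2 where e2: "e2 > 0" "\<And>s. 0 < s \<Longrightarrow> s < e2 \<Longrightarrow> f v < f (v - s)"
    using DERIV_neg_dec_left[OF d fv] by auto
  have "w \<noteq> u"
  proof
    assume "w = u"
    define s where "s = min (e1 / 2) (v - u)"
    have "f u < f (u + s)" using e1 uv unfolding s_def by auto
    moreover have "f (u + s) \<le> f w" using max uv e1 unfolding s_def by auto
    ultimately show False using \<open>w = u\<close> by simp
  qed
  moreover have "w \<noteq> v"
  proof
    assume "w = v"
    define s where "s = min (e2 / 2) (v - u)"
    have "f v < f (v - s)" using e2 uv unfolding s_def by auto
    moreover have "f (v - s) \<le> f w" using max uv e2 unfolding s_def by auto
    ultimately show False using \<open>w = v\<close> by simp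
  qed
  ultimately have inside: "u < w" "w < v" using w by auto
  have "f' w = 0"
  proof (rule DERIV_local_max[OF d, where d = "min (w - u) (v - w)"])
    show "0 < min (w - u) (v - w)" using inside by auto
    show "\<forall>y. \<bar>w - y\<bar> < min (w - u) (v - w) \<longrightarrow> f y \<le> f w"
      using max by (auto simp: abs_less_iff)
  qed
  with inside show ?thesis by blast
qed

lemma derivative_constant_sign:
  fixes f f' :: "real \<Rightarrow> real" and S :: "real set"
  assumes d: "\<And>x. (f has_real_derivative f' x) (at x)"
    and interval: "\<And>x y z. x \<in> S \<Longrightarrow> z \<in> S \<Longrightarrow> x \<le> y \<Longrightarrow> y \<le> z \<Longrightarrow> y \<in> S"
    and nz: "\<And>x. x \<in> S \<Longrightarrow> f' x \<noteq> 0"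
  shows "(\<forall>x\<in>S. f' x > 0) \<or> (\<forall>x\<in>S. f' x < 0)"
proof (rule ccontr)
  assume "\<not> ?thesis"
  then obtain u v where uv: "u \<in> S" "v \<in> S" "f' u > 0" "f' v < 0"
    using nz by (meson linorder_neqE_linordered_idom)
  have "\<exists>w. min u v < w \<and> w < max u v \<and> f' w = 0"
  proof (cases "u < v")
    case True
    then show ?thesis using darboux_zero[OF d True] uv by auto
  next
    case False
    then have "v < u" using uv by (cases "u = v") auto
    moreover have "\<And>x. ((\<lambda>x. - f x) has_real_derivative - f' x) (at x)" using d by (rule DERIV_minus)
    ultimately show ?thesis using darboux_zero[of "\<lambda>x. - f x" "\<lambda>x. - f' x" v u] uv by auto
  qed
  then obtain w where "min u v < w" "w < max u v" "f' w = 0" by blast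
  moreover have "w \<in> S"
  proof (cases "u \<le> v")
    case True
    then show ?thesis using uv calculation by (intro interval[where x=u and y=w and z=v]) auto
  next
    case False
    then show ?thesis using uv calculation by (intro interval[where x=v and y=w and z=u]) auto
  qed
  ultimately show False using nz by blast
qed

lemma derivative_sign_on_interval:
  fixes f f' :: "real \<Rightarrow> real"
  assumes d: "\<And>x. (f has_real_derivative f' x) (at x)"
    and nz: "\<And>x. a < x \<Longrightarrow> x < b \<Longrightarrow> f' x \<noteq> 0"
  shows "(\<forall>x\<in>{a..b}. f' x \<ge> 0) \<or> (\<forall>x\<in>{a..b}. f' x \<le> 0)"
proof -
  define S where "S = {x\<in>{a..b}. f' x \<noteq> 0}"
  have "(\<forall>x\<in>S. f' x > 0) \<or> (\<forall>x\<in>S. f' x < 0)"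
  proof (rule derivative_constant_sign[OF d])
    fix x y z assume "x \<in> S" "z \<in> S" "x \<le> y" "y \<le> z"
    then show "y \<in> S" unfolding S_def using nz[of y] by (cases "y = x \<or> y = z") auto
  qed (auto simp: S_def)
  then show ?thesis unfolding S_def by (metis (mono_tags, lifting) mem_Collect_eq order.refl less_imp_le)
qed

lemma power_increment_right:
  fixes F F' :: "real \<Rightarrow> real"
  assumes d: "\<And>u. (F has_real_derivative F' u) (at u)" and q: "q \<ge> 0" and zy: "z \<le> y"
    and bound: "\<And>u. z < u \<Longrightarrow> u < y \<Longrightarrow> a * (u - z) powr q \<le> F' u"
  shows "a / (1 + q) * (y - z) powr (1 + q) \<le> F y - F z"
proof -
  define G where "G = (\<lambda>u. F u - a / (1 + q) * (u - z) powr (1 + q))"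
  have "G z \<le> G y"
  proof (rule DERIV_nonneg_imp_increasing_open[OF zy])
    fix u assume u: "z < u" "u < y"
    have "((\<lambda>u. (u - z) powr (1 + q)) has_real_derivative (1 + q) * (u - z) powr q) (at u)"
      using u q by (auto intro!: derivative_eq_intros)
    then have "(G has_real_derivative F' u - a / (1 + q) * ((1 + q) * (u - z) powr q)) (at u)"
      unfolding G_def by (intro DERIV_diff d DERIV_cmult)
    moreover have "F' u - a / (1 + q) * ((1 + q) * (u - z) powr q) = F' u - a * (u - z) powr q"
      using q by simp
    ultimately show "\<exists>D. (G has_real_derivative D) (at u) \<and> 0 \<le> D"
      using bound[OF u] by auto
  next
    have "continuous_on {z..y} F" by (rule DERIV_continuous_on[OF has_field_derivative_at_within[OF d]])
    then show "continuous_on {z..y} G"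
      unfolding G_def using q by (intro continuous_intros continuous_on_powr') auto
  qed
  then show ?thesis unfolding G_def by simp
qed

text \<open>The same for a nonvanishing derivative bounded below in absolute value: by
  Darboux it has a constant sign, so \<open>F\<close> or \<open>-F\<close> falls under the previous lemma.\<close>
lemma power_increment_right_abs:
  fixes F F' :: "real \<Rightarrow> real"
  assumes d: "\<And>u. (F has_real_derivative F' u) (at u)" and q: "q \<ge> 0" and zy: "z \<le> y"
    and nz: "\<And>u. z < u \<Longrightarrow> u < y \<Longrightarrow> F' u \<noteq> 0"
    and bound: "\<And>u. z < u \<Longrightarrow> u < y \<Longrightarrow> a * (u - z) powr q \<le> \<bar>F' u\<bar>"
  shows "a / (1 + q) * (y - z) powr (1 + q) \<le> \<bar>F y - F z\<bar>"
proof -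
  have "(\<forall>u\<in>{z<..<y}. F' u > 0) \<or> (\<forall>u\<in>{z<..<y}. F' u < 0)"
    by (rule derivative_constant_sign[OF d]) (use nz in auto)
  then show ?thesis
  proof
    assume "\<forall>u\<in>{z<..<y}. F' u > 0"
    then have "a / (1 + q) * (y - z) powr (1 + q) \<le> F y - F z"
      using bound by (intro power_increment_right[OF d q zy]) force
    then show ?thesis by linarith
  next
    assume "\<forall>u\<in>{z<..<y}. F' u < 0"
    then have "a / (1 + q) * (y - z) powr (1 + q) \<le> (- F y) - (- F z)"
      using bound by (intro power_increment_right[of _ "\<lambda>u. - F' u"] DERIV_minus d q zy) force
    then show ?thesis by linarith
  qed
qed

text \<open>The case \<open>y < z\<close> follows
  by reflecting \<open>F\<close>.\<close>
lemma power_increment: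
  fixes F F' :: "real \<Rightarrow> real"
  assumes d: "\<And>u. (F has_real_derivative F' u) (at u)" and q: "q \<ge> 0"
    and nz: "\<And>u. min z y < u \<Longrightarrow> u < max z y \<Longrightarrow> F' u \<noteq> 0"
    and bound: "\<And>u. min z y < u \<Longrightarrow> u < max z y \<Longrightarrow> a * \<bar>u - z\<bar> powr q \<le> \<bar>F' u\<bar>"
  shows "a / (1 + q) * \<bar>y - z\<bar> powr (1 + q) \<le> \<bar>F y - F z\<bar>"
proof (cases "z \<le> y")
  case True
  have "a / (1 + q) * (y - z) powr (1 + q) \<le> \<bar>F y - F z\<bar>"
    by (rule power_increment_right_abs[OF d q True]) (use nz bound True in \<open>auto simp: min_def max_def\<close>)
  then show ?thesis using True by simp
next
  case False
  have "a / (1 + q) * (- y - - z) powr (1 + q) \<le> \<bar>F (- (- y)) - F (- (- z))\<bar>"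
  proof (rule power_increment_right_abs[of "\<lambda>u. F (- u)" "\<lambda>u. - F' (- u)"])
    show "((\<lambda>u. F (- u)) has_real_derivative - F' (- u)) (at u)" for u
      using DERIV_chain2[OF d DERIV_minus[OF DERIV_ident]] by simp
    fix u assume "- z < u" "u < - y"
    then show "- F' (- u) \<noteq> 0" "a * (u - - z) powr q \<le> \<bar>- F' (- u)\<bar>"
      using nz[of "- u"] bound[of "- u"] False by (auto simp: min_def max_def add.commute)
  qed (use q False in auto)
  then show ?thesis using False by simp
qed

lemma simple_zero_lower_bound:
  fixes f :: "real \<Rightarrow> real"
  assumes d: "(f has_real_derivative D) (at z)" and D: "D \<noteq> 0" and z: "f z = 0"
  shows "\<exists>c>0. \<exists>\<rho>>0. \<forall>w. \<bar>w - z\<bar> < \<rho> \<longrightarrow> c * \<bar>w - z\<bar> \<le> \<bar>f w\<bar>"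
proof -
  have "((\<lambda>k. (f (z + k) - f z) / k) \<longlongrightarrow> D) (at 0)" using d by (simp add: DERIV_def)
  moreover have "\<bar>D\<bar> / 2 > 0" using D by simp
  ultimately have "\<forall>\<^sub>F k in at 0. dist ((f (z + k) - f z) / k) D < \<bar>D\<bar> / 2" by (rule tendstoD)
  then obtain \<rho> where \<rho>: "\<rho> > 0"
    and near: "\<And>k. k \<noteq> 0 \<Longrightarrow> \<bar>k\<bar> < \<rho> \<Longrightarrow> \<bar>f (z + k) / k - D\<bar> < \<bar>D\<bar> / 2"
    using z by (auto simp: eventually_at dist_real_def)
  have "\<bar>D\<bar> / 2 * \<bar>w - z\<bar> \<le> \<bar>f w\<bar>" if "\<bar>w - z\<bar> < \<rho>" for w
  proof (cases "w = z")
    case False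
    then have "\<bar>f w / (w - z) - D\<bar> < \<bar>D\<bar> / 2" using near[of "w - z"] that by simp
    then have "\<bar>D\<bar> / 2 \<le> \<bar>f w / (w - z)\<bar>" by arith
    then have "\<bar>D\<bar> / 2 \<le> \<bar>f w\<bar> / \<bar>w - z\<bar>" by (simp only: abs_divide)
    then show ?thesis using False by (simp add: pos_le_divide_eq)
  qed (simp add: z)
  then show ?thesis using \<rho> \<open>\<bar>D\<bar> / 2 > 0\<close> by blast
qed

lemma root_of_power_bound:
  fixes r c \<delta> p :: real
  assumes r: "r \<ge> 0" and c: "c > 0" and p: "p > 0" and bound: "c * r powr p \<le> \<delta>"
  shows "r \<le> (1 / c) powr (1 / p) * \<delta> powr (1 / p)"
proof -
  have "r powr p \<le> \<delta> / c" using bound c by (simp add: field_simps)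
  then have "(r powr p) powr (1 / p) \<le> (\<delta> / c) powr (1 / p)"
    using p by (intro powr_mono2) auto
  moreover have "(r powr p) powr (1 / p) = r" using r p by (simp add: powr_powr)
  moreover have "(\<delta> / c) powr (1 / p) = (1 / c) powr (1 / p) * \<delta> powr (1 / p)"
    using c by (simp add: powr_divide powr_mult divide_inverse mult.commute)
  ultimately show ?thesis by simp
qed

lemma monotone_sublevel_split:
  fixes g :: "real \<Rightarrow> real"
  assumes mono: "mono_on {a..b} g" and cont: "continuous_on {a..b} g"
    and ab: "a \<le> b" and \<delta>: "\<delta> > 0"
  obtains c d where "a \<le> c" "c \<le> d" "d \<le> b"
    "c = a \<or> (\<forall>x\<in>{a..c}. \<delta> \<le> \<bar>g x\<bar>)"
    "c = d \<or> (\<forall>x\<in>{c..d}. \<bar>g x\<bar> \<le> \<delta>)"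
    "d = b \<or> (\<forall>x\<in>{d..b}. \<delta> \<le> \<bar>g x\<bar>)"
proof -
  have le: "g x \<le> g y" if "a \<le> x" "x \<le> y" "y \<le> b" for x y
    using mono that by (auto intro: mono_onD)
  have below: "\<forall>x\<in>{a..c}. \<delta> \<le> \<bar>g x\<bar>" if "a \<le> c" "c \<le> b" "g c \<le> - \<delta>" for c
  proof
    fix x assume "x \<in> {a..c}"
    then have "g x \<le> g c" using le[of x c] that by auto
    then show "\<delta> \<le> \<bar>g x\<bar>" using that by linarith
  qed
  have above: "\<forall>x\<in>{d..b}. \<delta> \<le> \<bar>g x\<bar>" if "a \<le> d" "d \<le> b" "\<delta> \<le> g d" for d
  proof
    fix x assume "x \<in> {d..b}"
    then have "g d \<le> g x" using le[of d x] that by auto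
    then show "\<delta> \<le> \<bar>g x\<bar>" using that by linarith
  qed
  consider "g b < - \<delta>" | "g a > \<delta>" | "- \<delta> \<le> g b" "g a \<le> \<delta>" by linarith
  then show ?thesis
  proof cases
    case 1
    then show ?thesis using that[of b b] below[of b] ab by auto
  next
    case 2
    then show ?thesis using that[of a a] above[of a] ab by auto
  next
    case 3
    txt \<open>\<open>c\<close> is where \<open>g\<close> reaches \<open>-\<delta>\<close>, and \<open>d\<close> where it reaches \<open>\<delta>\<close>.\<close>
    obtain c where c: "a \<le> c" "c \<le> b" "- \<delta> \<le> g c" "g c \<le> \<delta>"
      "c = a \<or> (\<forall>x\<in>{a..c}. \<delta> \<le> \<bar>g x\<bar>)"
    proof (cases "- \<delta> \<le> g a")
      case True
      then show ?thesis using that[of a] ab 3 by auto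
    next
      case False
      then obtain c where "a \<le> c" "c \<le> b" "g c = - \<delta>"
        using IVT'[of g a "- \<delta>" b] 3 ab cont by auto
      then show ?thesis using that[of c] below[of c] \<delta> by auto
    qed
    obtain d where d: "c \<le> d" "d \<le> b" "g d \<le> \<delta>" "d = b \<or> (\<forall>x\<in>{d..b}. \<delta> \<le> \<bar>g x\<bar>)"
    proof (cases "g b \<le> \<delta>")
      case True
      then show ?thesis using that[of b] c by auto
    next
      case False
      have "continuous_on {c..b} g" using cont by (rule continuous_on_subset) (use c in auto)
      then obtain d where "c \<le> d" "d \<le> b" "g d = \<delta>"
        using IVT'[of g c \<delta> b] False c by auto
      then show ?thesis using that[of d] above[of d] c by auto
    qed
    have "\<bar>g x\<bar> \<le> \<delta>" if "x \<in> {c..d}" for x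
      using le[of c x] le[of x d] that c d by (simp add: abs_le_iff)
    then show ?thesis using that[of c d] c d by auto
  qed
qed

text \<open>Near a zero where \<open>|f(w)| \<ge> c|w - z|\<^sup>p\<close>, intervals on which \<open>|f| \<le> \<delta>\<close> have length at
  most \<open>2 (\<delta>/c)\<^sup>1\<^sup>/\<^sup>p\<close>, since both endpoints are that close to \<open>z\<close>.\<close>
lemma sublevel_near_power_zero:
  fixes f :: "real \<Rightarrow> real"
  assumes c: "c > 0" and p: "p > 0"
    and lower: "\<And>w. \<bar>w - z\<bar> < \<rho> \<Longrightarrow> c * \<bar>w - z\<bar> powr p \<le> \<bar>f w\<bar>"
    and xy: "x \<le> y" "{x..y} \<subseteq> ball z \<rho>" and sub: "\<forall>w\<in>{x..y}. \<bar>f w\<bar> \<le> \<delta>"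
  shows "y - x \<le> (2 * (1 / c) powr (1 / p)) * \<delta> powr (1 / p)"
proof -
  have near: "\<bar>w - z\<bar> \<le> (1 / c) powr (1 / p) * \<delta> powr (1 / p)" if "w \<in> {x..y}" for w
  proof (rule root_of_power_bound[OF _ c p])
    have "\<bar>w - z\<bar> < \<rho>" using xy(2) that by (auto simp: dist_real_def abs_minus_commute)
    then show "c * \<bar>w - z\<bar> powr p \<le> \<delta>" using lower[of w] sub that by fastforce
  qed simp
  have "x \<in> {x..y}" "y \<in> {x..y}" using xy(1) by auto
  then show ?thesis using near[of x] near[of y] by (simp add: abs_le_iff)
qed

text \<open>Near a point where a continuous \<open>f\<close> does not vanish, sublevel intervals exist only
  for \<open>\<delta> \<ge> |f(z)|/2\<close>, so their length (at most the diameter of the neighbourhood) is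
  \<open>O(\<delta>\<^sup>s)\<close> for any \<open>s \<ge> 0\<close>.\<close>
lemma sublevel_near_nonzero:
  fixes f :: "real \<Rightarrow> real"
  assumes cont: "isCont f z" and nz: "f z \<noteq> 0" and s: "s \<ge> 0"
  shows "\<exists>\<rho>>0. \<exists>K. \<forall>\<delta>>0. \<forall>x y. x \<le> y \<longrightarrow> {x..y} \<subseteq> ball z \<rho> \<longrightarrow>
           (\<forall>w\<in>{x..y}. \<bar>f w\<bar> \<le> \<delta>) \<longrightarrow> y - x \<le> K * \<delta> powr s"
proof -
  define m where "m = \<bar>f z\<bar> / 2"
  have m: "m > 0" using nz by (simp add: m_def)
  obtain \<rho> where \<rho>: "\<rho> > 0" and close: "\<And>w. norm (w - z) < \<rho> \<Longrightarrow> \<bar>f w - f z\<bar> < m"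
    using cont m unfolding continuous_at_real_range by blast
  define K where "K = 2 * \<rho> / m powr s"
  have "y - x \<le> K * \<delta> powr s"
    if xy: "x \<le> y" "{x..y} \<subseteq> ball z \<rho>" and sub: "\<forall>w\<in>{x..y}. \<bar>f w\<bar> \<le> \<delta>" for \<delta> x y
  proof -
    have x: "x \<in> ball z \<rho>" and "y \<in> ball z \<rho>" using xy by auto
    then have len: "y - x \<le> 2 * \<rho>" by (auto simp: dist_real_def)
    have "\<bar>f x - f z\<bar> < m" using close[of x] x by (simp add: dist_real_def abs_minus_commute)
    moreover have "\<bar>f x\<bar> \<le> \<delta>" using xy(1) sub by simp
    ultimately have "m \<le> \<delta>" unfolding m_def by arith
    then have "m powr s \<le> \<delta> powr s" using m s by (intro powr_mono2) auto
    then have "2 * \<rho> \<le> K * \<delta> powr s" unfolding K_def using m \<rho> by (simp add: field_simps)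
    with len show ?thesis by linarith
  qed
  then show ?thesis using \<rho> by blast
qed

text \<open>Length bounds for sublevel intervals \<open>{|f| \<le> \<delta>}\<close> that hold locally near every
  point of a compact set hold uniformly for all short intervals starting in the set
  (a Lebesgue-number argument on a finite subcover).\<close>
lemma compact_uniform_sublevel:
  fixes f :: "real \<Rightarrow> real" and S :: "real set"
  assumes S: "compact S"
    and local: "\<And>z. z \<in> S \<Longrightarrow> \<exists>\<rho>>0. \<exists>K. \<forall>\<delta>>0. \<forall>x y. x \<le> y \<longrightarrow> {x..y} \<subseteq> ball z \<rho> \<longrightarrow>
                  (\<forall>w\<in>{x..y}. \<bar>f w\<bar> \<le> \<delta>) \<longrightarrow> y - x \<le> K * \<delta> powr s"
  shows "\<exists>e>0. \<exists>K. \<forall>\<delta>>0. \<forall>x y. x \<in> S \<longrightarrow> x \<le> y \<longrightarrow> y - x < e \<longrightarrow>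
                  (\<forall>w\<in>{x..y}. \<bar>f w\<bar> \<le> \<delta>) \<longrightarrow> y - x \<le> K * \<delta> powr s"
proof -
  obtain \<rho> Kz where \<rho>: "\<And>z. z \<in> S \<Longrightarrow> \<rho> z > 0"
    and Kz: "\<And>z \<delta> x y. z \<in> S \<Longrightarrow> \<delta> > 0 \<Longrightarrow> x \<le> y \<Longrightarrow> {x..y} \<subseteq> ball z (\<rho> z) \<Longrightarrow>
                (\<forall>w\<in>{x..y}. \<bar>f w\<bar> \<le> \<delta>) \<Longrightarrow> y - x \<le> Kz z * \<delta> powr s"
    using local by metis
  obtain T where T: "T \<subseteq> S" "finite T" and cover: "S \<subseteq> (\<Union>z\<in>T. ball z (\<rho> z / 2))"
    using compactE_image[OF S, of S "\<lambda>z. ball z (\<rho> z / 2)"] \<rho> by force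
  define e where "e = Min (insert 1 ((\<lambda>z. \<rho> z / 2) ` T))"
  define K where "K = Max (insert 0 (Kz ` T))"
  have e: "e > 0" unfolding e_def using T \<rho> by (subst Min_gr_iff) auto
  have "y - x \<le> K * \<delta> powr s"
    if \<delta>: "\<delta> > 0" and x: "x \<in> S" "x \<le> y" "y - x < e"
      and sub: "\<forall>w\<in>{x..y}. \<bar>f w\<bar> \<le> \<delta>" for \<delta> x y
  proof -
    obtain z where z: "z \<in> T" "dist z x < \<rho> z / 2" using cover x(1) by auto
    have "e \<le> \<rho> z / 2" unfolding e_def using T z by (intro Min_le) auto
    have "{x..y} \<subseteq> ball z (\<rho> z)"
    proof
      fix w assume w: "w \<in> {x..y}"
      have "dist z w \<le> dist z x + dist x w" by (rule dist_triangle)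
      also have "dist x w \<le> y - x" using w by (simp add: dist_real_def)
      finally show "w \<in> ball z (\<rho> z)" using z x \<open>e \<le> \<rho> z / 2\<close> by simp
    qed
    then have "y - x \<le> Kz z * \<delta> powr s" using Kz[OF _ \<delta> x(2) _ sub] z T by blast
    also have "\<dots> \<le> K * \<delta> powr s"
      unfolding K_def using T z by (intro mult_right_mono Max_ge) auto
    finally show ?thesis .
  qed
  then show ?thesis using e by blast
qed

lemma cis_phase_integrable:
  fixes h h' :: "real \<Rightarrow> real"
  assumes "\<And>x. (h has_real_derivative h' x) (at x)"
  shows "(\<lambda>x. cis (t * h x)) integrable_on {a..b}"
proof -
  have "continuous_on {a..b} h"
    using DERIV_isCont[OF assms] by (intro continuous_at_imp_continuous_on) auto
  then show ?thesis by (intro integrable_continuous_interval continuous_intros)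
qed

text \<open>Replacing \<open>h\<close> by \<open>-h\<close> conjugates the integral; used to reduce to \<open>h'' \<ge> 0\<close>.\<close>
lemma norm_integral_cis_uminus:
  "norm (integral {a..b} (\<lambda>x. cis (t * - h x))) = norm (integral {a..b} (\<lambda>x. cis (t * h x)))"
proof -
  have "integral {a..b} (\<lambda>x. cis (t * - h x)) = cnj (integral {a..b} (\<lambda>x. cis (t * h x)))"
    by (simp add: integral_cnj cis_cnj)
  then show ?thesis by simp
qed

text \<open>The primitive used for integration by parts in the van der Corput lemma:
  \<open>cis (t h) = (cis (t h) / (\<i> t h'))' + cis (t h) h'' / (\<i> t h'\<^sup>2)\<close> wherever \<open>h' \<noteq> 0\<close>.\<close>
lemma cis_phase_by_parts_derivative:
  fixes h h' h'' :: "real \<Rightarrow> real"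
  assumes d1: "\<And>x. (h has_real_derivative h' x) (at x)" and d2: "(h' has_real_derivative h'' x) (at x)"
    and nz: "h' x \<noteq> 0" and t: "t \<noteq> 0"
  shows "((\<lambda>x. cis (t * h x) * of_real (1 / (t * h' x)) * - \<i>) has_vector_derivative
           cis (t * h x) - cis (t * h x) * of_real (h'' x / (t * (h' x)\<^sup>2)) * - \<i>) (at x)"
proof -
  define c where "c = (\<lambda>x. cis (t * h x))"
  have dc: "(c has_vector_derivative (\<i> * of_real (t * h' x)) * c x) (at x)"
  proof -
    have "((\<lambda>x. \<i> * of_real (t * h x)) has_vector_derivative \<i> * of_real (t * h' x)) (at x)"
      by (intro derivative_intros DERIV_cmult d1)
    from field_vector_diff_chain_at[OF this DERIV_exp]
    show ?thesis unfolding c_def cis_conv_exp by (simp add: o_def)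
  qed
  have dinv: "((\<lambda>x. 1 / (t * h' x)) has_real_derivative - h'' x / (t * (h' x)\<^sup>2)) (at x)"
  proof -
    have "((\<lambda>x. 1 / (t * h' x)) has_real_derivative - (t * h'' x) / (t * h' x)\<^sup>2) (at x)"
      using nz t by (auto intro!: derivative_eq_intros d2 simp: power2_eq_square)
    then show ?thesis using t nz by (simp add: power2_eq_square field_simps)
  qed
  have "((\<lambda>x. c x * of_real (1 / (t * h' x))) has_vector_derivative
       c x * of_real (- h'' x / (t * (h' x)\<^sup>2)) + (\<i> * of_real (t * h' x)) * c x * of_real (1 / (t * h' x))) (at x)"
    by (intro has_vector_derivative_mult has_vector_derivative_of_real dc dinv)
  from has_vector_derivative_mult_left[OF this, of "- \<i>"]
  have deriv: "((\<lambda>x. c x * of_real (1 / (t * h' x)) * - \<i>) has_vector_derivative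
       (\<i> * of_real (t * h' x)) * c x * of_real (1 / (t * h' x)) * - \<i>
       + c x * of_real (- h'' x / (t * (h' x)\<^sup>2)) * - \<i>) (at x)"
    by (simp add: algebra_simps)
  have eq: "(\<i> * of_real (t * h' x)) * c x * of_real (1 / (t * h' x)) * - \<i>
       + c x * of_real (- h'' x / (t * (h' x)\<^sup>2)) * - \<i>
     = c x - c x * of_real (h'' x / (t * (h' x)\<^sup>2)) * - \<i>"
    using nz t by (simp add: field_simps)
  from deriv[unfolded eq] show ?thesis unfolding c_def .
qed

text \<open>The remainder term of that integration by parts is \<open>h''/(t h'\<^sup>2) = (-1/(t h'))'\<close>, so its
  integral is the increment of \<open>-1/(t h')\<close>.\<close>
lemma reciprocal_derivative_integral:
  fixes h' h'' :: "real \<Rightarrow> real"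
  assumes d2: "\<And>x. (h' has_real_derivative h'' x) (at x)"
    and nz: "\<And>x. x \<in> {u..v} \<Longrightarrow> h' x \<noteq> 0" and t: "t \<noteq> 0" and uv: "u \<le> v"
  shows "((\<lambda>x. h'' x / (t * (h' x)\<^sup>2)) has_integral (1 / (t * h' u) - 1 / (t * h' v))) {u..v}"
proof -
  have "((\<lambda>x. - (1 / (t * h' x))) has_real_derivative h'' x / (t * (h' x)\<^sup>2)) (at x)"
    if "x \<in> {u..v}" for x
    using nz[OF that] t by (auto intro!: derivative_eq_intros d2 simp: power2_eq_square field_simps)
  then have "((\<lambda>x. h'' x / (t * (h' x)\<^sup>2)) has_integral
      (- (1 / (t * h' v))) - (- (1 / (t * h' u)))) {u..v}"
    using uv by (intro fundamental_theorem_of_calculus)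
      (auto simp: has_real_derivative_iff_has_vector_derivative intro: has_vector_derivative_at_within)
  then show ?thesis by simp
qed

text \<open>Integrate by parts with the primitive above; the remainder
  term integrates to the total variation of \<open>1/(t h')\<close>.\<close>
lemma van_der_corput_mono:
  fixes h h' h'' :: "real \<Rightarrow> real"
  assumes d1: "\<And>x. (h has_real_derivative h' x) (at x)"
    and d2: "\<And>x. (h' has_real_derivative h'' x) (at x)"
    and t: "t > 0" and \<delta>: "\<delta> > 0" and uv: "u \<le> v"
    and convex: "\<And>x. x \<in> {u..v} \<Longrightarrow> h'' x \<ge> 0"
    and big: "\<And>x. x \<in> {u..v} \<Longrightarrow> \<delta> \<le> \<bar>h' x\<bar>"
  shows "norm (integral {u..v} (\<lambda>x. cis (t * h x))) \<le> 4 / (t * \<delta>)"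
proof -
  define c where "c = (\<lambda>x. cis (t * h x))"
  define G where "G = (\<lambda>x. c x * of_real (1 / (t * h' x)) * - \<i>)"
  define R where "R = (\<lambda>x. c x * of_real (h'' x / (t * (h' x)\<^sup>2)) * - \<i>)"
  have nz: "h' x \<noteq> 0" if "x \<in> {u..v}" for x using big[OF that] \<delta> by auto
  have "(G has_vector_derivative c x - R x) (at x)" if "x \<in> {u..v}" for x
    using cis_phase_by_parts_derivative[where h''=h'' and x=x, OF d1 d2 nz[OF that]] t
    unfolding G_def R_def c_def by simp
  then have by_parts: "((\<lambda>x. c x - R x) has_integral (G v - G u)) {u..v}"
    using uv by (intro fundamental_theorem_of_calculus) (auto intro: has_vector_derivative_at_within)
  have ic: "c integrable_on {u..v}" unfolding c_def by (rule cis_phase_integrable[OF d1])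
  have iR: "R integrable_on {u..v}"
    using integrable_diff[OF ic has_integral_integrable[OF by_parts]] by simp
  have split: "integral {u..v} c = (G v - G u) + integral {u..v} R"
    using integral_unique[OF by_parts] integral_diff[OF ic iR] by (simp add: algebra_simps)
  have variation: "((\<lambda>x. h'' x / (t * (h' x)\<^sup>2)) has_integral (1 / (t * h' u) - 1 / (t * h' v))) {u..v}"
    using t by (intro reciprocal_derivative_integral[OF d2 nz _ uv]) auto
  have nR: "norm (R x) \<le> h'' x / (t * (h' x)\<^sup>2)" if "x \<in> {u..v}" for x
    using convex[OF that] t unfolding R_def c_def by (simp add: norm_mult norm_divide norm_power)
  have boundary: "\<bar>1 / (t * h' x)\<bar> \<le> 1 / (t * \<delta>)" if "x \<in> {u..v}" for x
    using big[OF that] t \<delta> by (simp add: abs_mult frac_le mult_left_mono)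
  have nG: "norm (G x) = \<bar>1 / (t * h' x)\<bar>" for x
    unfolding G_def c_def by (simp add: norm_mult norm_divide abs_mult)
  have "norm (integral {u..v} R) \<le> 1 / (t * h' u) - 1 / (t * h' v)"
    using integral_norm_bound_integral[OF iR _ nR] variation by (metis has_integral_integrable integral_unique)
  also have "\<dots> \<le> 1 / (t * \<delta>) + 1 / (t * \<delta>)"
    using boundary[of u] boundary[of v] uv by (smt (verit) atLeastAtMost_iff)
  finally have remainder: "norm (integral {u..v} R) \<le> 2 / (t * \<delta>)" by (simp add: mult.commute)
  have "norm (integral {u..v} c) \<le> norm (G v) + norm (G u) + norm (integral {u..v} R)"
    unfolding split by (metis norm_triangle_ineq4 norm_triangle_le add_mono order_refl)
  also have "\<dots> \<le> 1 / (t * \<delta>) + 1 / (t * \<delta>) + 2 / (t * \<delta>)"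
    using boundary[of u] boundary[of v] uv remainder unfolding nG by (intro add_mono) auto
  finally have "norm (integral {u..v} c) \<le> 4 / (t * \<delta>)" by (simp add: mult.commute)
  then show ?thesis unfolding c_def by simp
qed

text \<open>The same estimate when \<open>h'\<close> is monotone in either direction (reduce to the
  nondecreasing case by complex conjugation, i.e.\ replacing \<open>h\<close> by \<open>-h\<close>).\<close>
lemma van_der_corput:
  fixes h h' h'' :: "real \<Rightarrow> real"
  assumes d1: "\<And>x. (h has_real_derivative h' x) (at x)"
    and d2: "\<And>x. (h' has_real_derivative h'' x) (at x)"
    and t: "t > 0" and \<delta>: "\<delta> > 0" and uv: "u \<le> v"
    and sign: "(\<forall>x\<in>{u..v}. h'' x \<ge> 0) \<or> (\<forall>x\<in>{u..v}. h'' x \<le> 0)"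
    and big: "\<And>x. x \<in> {u..v} \<Longrightarrow> \<delta> \<le> \<bar>h' x\<bar>"
  shows "norm (integral {u..v} (\<lambda>x. cis (t * h x))) \<le> 4 / (t * \<delta>)"
  using sign
proof
  assume "\<forall>x\<in>{u..v}. h'' x \<ge> 0"
  then show ?thesis using van_der_corput_mono[OF d1 d2 t \<delta> uv _ big] by blast
next
  assume "\<forall>x\<in>{u..v}. h'' x \<le> 0"
  then have "norm (integral {u..v} (\<lambda>x. cis (t * - h x))) \<le> 4 / (t * \<delta>)"
    by (intro van_der_corput_mono[of _ "\<lambda>x. - h' x" "\<lambda>x. - h'' x"] DERIV_minus d1 d2 t \<delta> uv)
      (use big in auto)
  then show ?thesis by (simp only: norm_integral_cis_uminus)
qed

text \<open>Estimate on an interval where \<open>h'\<close> is monotone: away from the sublevel set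
  \<open>{|h'| \<le> \<delta>}\<close> use van der Corput on each side, on it use the trivial bound
  (its length \<open>L\<close>).\<close>
lemma oscillatory_piece_mono:
  fixes h h' h'' :: "real \<Rightarrow> real"
  assumes d1: "\<And>x. (h has_real_derivative h' x) (at x)"
    and d2: "\<And>x. (h' has_real_derivative h'' x) (at x)"
    and t: "t > 0" and \<delta>: "\<delta> > 0" and ab: "a \<le> b" and L: "L \<ge> 0"
    and convex: "\<And>x. x \<in> {a..b} \<Longrightarrow> h'' x \<ge> 0"
    and sublevel: "\<And>x y. a \<le> x \<Longrightarrow> x \<le> y \<Longrightarrow> y \<le> b \<Longrightarrow> \<forall>w\<in>{x..y}. \<bar>h' w\<bar> \<le> \<delta> \<Longrightarrow> y - x \<le> L"
  shows "norm (integral {a..b} (\<lambda>x. cis (t * h x))) \<le> 8 / (t * \<delta>) + L"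
proof -
  define I where "I = (\<lambda>u v. integral {u..v} (\<lambda>x. cis (t * h x)))"
  have "mono_on {a..b} h'"
    by (intro mono_onI DERIV_nonneg_imp_nondecreasing[where f=h'])
      (use d2 convex in \<open>auto intro!: exI[of _ "h'' _"]\<close>)
  moreover have "continuous_on {a..b} h'"
    using DERIV_isCont[OF d2] by (intro continuous_at_imp_continuous_on) auto
  ultimately obtain c d where cd: "a \<le> c" "c \<le> d" "d \<le> b"
    and left: "c = a \<or> (\<forall>x\<in>{a..c}. \<delta> \<le> \<bar>h' x\<bar>)"
    and middle: "c = d \<or> (\<forall>x\<in>{c..d}. \<bar>h' x\<bar> \<le> \<delta>)"
    and right: "d = b \<or> (\<forall>x\<in>{d..b}. \<delta> \<le> \<bar>h' x\<bar>)"
    using monotone_sublevel_split ab \<delta> by blast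
  have outer: "norm (I u v) \<le> 4 / (t * \<delta>)"
    if "a \<le> u" "u \<le> v" "v \<le> b" "u = v \<or> (\<forall>x\<in>{u..v}. \<delta> \<le> \<bar>h' x\<bar>)" for u v
    using that(4)
  proof
    assume "u = v"
    then show ?thesis using t \<delta> by (simp add: I_def)
  next
    assume "\<forall>x\<in>{u..v}. \<delta> \<le> \<bar>h' x\<bar>"
    then show ?thesis unfolding I_def
      using that convex by (intro van_der_corput_mono[OF d1 d2 t \<delta>]) auto
  qed
  have "continuous_on {c..d} h" by (rule DERIV_continuous_on[OF has_field_derivative_at_within[OF d1]])
  then have "norm (I c d) \<le> 1 * (d - c)"
    unfolding I_def by (intro integral_bound continuous_intros cd) auto
  also have "d - c \<le> L" using middle sublevel[of c d] cd L by auto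
  finally have inner: "norm (I c d) \<le> L" by simp
  have combine: "I u w = I u v + I v w" if "u \<le> v" "v \<le> w" for u v w
    unfolding I_def using Henstock_Kurzweil_Integration.integral_combine[OF that cis_phase_integrable[OF d1]] ..
  have "I a b = I a c + I c d + I d b"
    using combine[of a c b] combine[of c d b] cd by (simp add: add.assoc)
  then have "norm (I a b) \<le> norm (I a c) + norm (I c d) + norm (I d b)"
    using norm_triangle_ineq[of "I a c + I c d" "I d b"] norm_triangle_ineq[of "I a c" "I c d"] by simp
  also have "\<dots> \<le> 4 / (t * \<delta>) + L + 4 / (t * \<delta>)"
    using outer[of a c] outer[of d b] inner left right cd by (intro add_mono) auto
  finally show ?thesis unfolding I_def by (simp add: mult.commute)
qed

lemma oscillatory_piece:
  fixes h h' h'' :: "real \<Rightarrow> real"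
  assumes d1: "\<And>x. (h has_real_derivative h' x) (at x)"
    and d2: "\<And>x. (h' has_real_derivative h'' x) (at x)"
    and t: "t > 0" and \<delta>: "\<delta> > 0" and ab: "a \<le> b" and L: "L \<ge> 0"
    and sign: "(\<forall>x\<in>{a..b}. h'' x \<ge> 0) \<or> (\<forall>x\<in>{a..b}. h'' x \<le> 0)"
    and sublevel: "\<And>x y. a \<le> x \<Longrightarrow> x \<le> y \<Longrightarrow> y \<le> b \<Longrightarrow> \<forall>w\<in>{x..y}. \<bar>h' w\<bar> \<le> \<delta> \<Longrightarrow> y - x \<le> L"
  shows "norm (integral {a..b} (\<lambda>x. cis (t * h x))) \<le> 8 / (t * \<delta>) + L"
  using sign
proof
  assume "\<forall>x\<in>{a..b}. h'' x \<ge> 0"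
  then show ?thesis using oscillatory_piece_mono[OF d1 d2 t \<delta> ab L _ sublevel] by blast
next
  assume "\<forall>x\<in>{a..b}. h'' x \<le> 0"
  then have "norm (integral {a..b} (\<lambda>x. cis (t * - h x))) \<le> 8 / (t * \<delta>) + L"
    by (intro oscillatory_piece_mono[of _ "\<lambda>x. - h' x" "\<lambda>x. - h'' x"] DERIV_minus d1 d2 t \<delta> ab L)
      (use sublevel in auto)
  then show ?thesis by (simp only: norm_integral_cis_uminus)
qed

text \<open>An additive interval function bounded by \<open>B\<close> on every interval whose interior
  avoids a finite set \<open>Z\<close> is bounded by \<open>(|Z| + 1) B\<close> on every interval: cut at the
  points of \<open>Z\<close>.\<close>
lemma bound_by_splitting:
  fixes I :: "real \<Rightarrow> real \<Rightarrow> 'a::real_normed_vector"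
  assumes Z: "finite Z"
    and additive: "\<And>a c b. a \<le> c \<Longrightarrow> c \<le> b \<Longrightarrow> I a b = I a c + I c b"
    and piece: "\<And>a b. a \<le> b \<Longrightarrow> Z \<inter> {a<..<b} = {} \<Longrightarrow> norm (I a b) \<le> B"
    and ab: "a \<le> b"
  shows "norm (I a b) \<le> (real (card Z) + 1) * B"
proof -
  have "norm (I a a) \<le> B" by (rule piece) auto
  then have B: "B \<ge> 0" using norm_ge_zero order_trans by blast
  have main: "norm (I a b) \<le> (real n + 1) * B" if "a \<le> b" "card (Z \<inter> {a<..<b}) = n" for n a b
    using that
  proof (induction n arbitrary: a b rule: less_induct)
    case (less n a b)
    show ?case
    proof (cases "Z \<inter> {a<..<b} = {}")
      case True
      moreover have "B \<le> (real n + 1) * B" using B by (simp add: distrib_right)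
      ultimately show ?thesis using piece[OF less.prems(1)] by linarith
    next
      case False
      then obtain z where z: "z \<in> Z" "a < z" "z < b" by auto
      have split: "Z \<inter> {a<..<b} = (Z \<inter> {a<..<z}) \<union> insert z (Z \<inter> {z<..<b})" using z by auto
      have "card (Z \<inter> {a<..<b}) = card (Z \<inter> {a<..<z}) + card (insert z (Z \<inter> {z<..<b}))"
        unfolding split using Z by (intro card_Un_disjoint) auto
      also have "card (insert z (Z \<inter> {z<..<b})) = card (Z \<inter> {z<..<b}) + 1" using Z by simp
      finally have "card (Z \<inter> {a<..<b}) = card (Z \<inter> {a<..<z}) + (card (Z \<inter> {z<..<b}) + 1)" .
      moreover define n1 n2 where "n1 = card (Z \<inter> {a<..<z})" and "n2 = card (Z \<inter> {z<..<b})"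
      ultimately have n: "n = n1 + n2 + 1" using less.prems(2) by simp
      have "norm (I a b) \<le> norm (I a z) + norm (I z b)"
        unfolding additive[of a z b, OF less_imp_le less_imp_le, OF z(2,3)] by (rule norm_triangle_ineq)
      also have "\<dots> \<le> (real n1 + 1) * B + (real n2 + 1) * B"
      proof (rule add_mono)
        show "norm (I a z) \<le> (real n1 + 1) * B" using less.IH[of n1 a z, OF _ _ n1_def[symmetric]] n z by simp
        show "norm (I z b) \<le> (real n2 + 1) * B" using less.IH[of n2 z b, OF _ _ n2_def[symmetric]] n z by simp
      qed
      also have "\<dots> = (real n + 1) * B" using n by (simp add: algebra_simps)
      finally show ?thesis .
    qed
  qed
  have "norm (I a b) \<le> (real (card (Z \<inter> {a<..<b})) + 1) * B" using main[OF ab refl] .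
  also have "\<dots> \<le> (real (card Z) + 1) * B"
    using B Z by (intro mult_right_mono) (auto intro: card_mono)
  finally show ?thesis .
qed

lemma cauchy_convergent_at_top:
  fixes G :: "real \<Rightarrow> complex"
  assumes cauchy: "\<And>e. e > 0 \<Longrightarrow> \<exists>R. \<forall>x y. R \<le> x \<longrightarrow> x \<le> y \<longrightarrow> norm (G y - G x) < e"
  shows "\<exists>L. (G \<longlongrightarrow> L) at_top"
proof -
  have "cauchy_filter (filtermap G at_top)"
    unfolding cauchy_filter_metric_filtermap
  proof (intro allI impI)
    fix e :: real assume "e > 0"
    then obtain R where R: "\<And>x y. R \<le> x \<Longrightarrow> x \<le> y \<Longrightarrow> norm (G y - G x) < e" using cauchy by blast
    show "\<exists>P. eventually P at_top \<and> (\<forall>x y. P x \<and> P y \<longrightarrow> dist (G x) (G y) < e)"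
    proof (intro exI conjI allI impI)
      show "eventually (\<lambda>x. R \<le> x) at_top" by (rule eventually_ge_at_top)
      fix x y assume "R \<le> x \<and> R \<le> y"
      then show "dist (G x) (G y) < e"
        using R[of x y] R[of y x] by (cases "x \<le> y") (auto simp: dist_norm norm_minus_commute)
    qed
  qed
  then have "\<exists>L. filtermap G at_top \<le> nhds L"
    by (intro cauchy_filter_complete_converges[OF _ complete_UNIV]) (auto simp: filtermap_bot_iff)
  then show ?thesis unfolding filterlim_def by blast
qed

lemma cauchy_convergent_at_bot:
  fixes G :: "real \<Rightarrow> complex"
  assumes cauchy: "\<And>e. e > 0 \<Longrightarrow> \<exists>R. \<forall>x y. x \<le> y \<longrightarrow> y \<le> R \<longrightarrow> norm (G y - G x) < e"
  shows "\<exists>L. (G \<longlongrightarrow> L) at_bot"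
proof -
  have "\<exists>L. ((\<lambda>x. G (- x)) \<longlongrightarrow> L) at_top"
  proof (rule cauchy_convergent_at_top)
    fix e :: real assume "e > 0"
    then obtain R where R: "\<And>x y. x \<le> y \<Longrightarrow> y \<le> R \<Longrightarrow> norm (G y - G x) < e" using cauchy by blast
    show "\<exists>R. \<forall>x y. R \<le> x \<longrightarrow> x \<le> y \<longrightarrow> norm (G (- y) - G (- x)) < e"
    proof (intro exI[of _ "- R"] allI impI)
      fix x y assume "- R \<le> x" "x \<le> y"
      then show "norm (G (- y) - G (- x)) < e" using R[of "- y" "- x"] by (simp add: norm_minus_commute)
    qed
  qed
  then show ?thesis by (simp add: filterlim_at_bot_mirror)
qed

lemma improper_integral_R_exists:
  fixes f :: "real \<Rightarrow> complex"
  assumes int: "\<And>a b. f integrable_on {a..b}"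
    and tails: "\<And>e. e > 0 \<Longrightarrow> \<exists>R. \<forall>u v. (R \<le> u \<and> u \<le> v \<or> u \<le> v \<and> v \<le> - R) \<longrightarrow>
                  norm (integral {u..v} f) < e"
  shows "\<exists>L. improper_integral_R f L"
proof -
  have combine: "integral {a..b} f = integral {a..c} f + integral {c..b} f" if "a \<le> c" "c \<le> b" for a b c
    using Henstock_Kurzweil_Integration.integral_combine[OF that int] by simp
  have "\<exists>Lp. ((\<lambda>x. integral {0..x} f) \<longlongrightarrow> Lp) at_top"
  proof (rule cauchy_convergent_at_top)
    fix e :: real assume "e > 0"
    then obtain R where R: "\<And>u v. R \<le> u \<Longrightarrow> u \<le> v \<Longrightarrow> norm (integral {u..v} f) < e"
      using tails by blast
    show "\<exists>R. \<forall>x y. R \<le> x \<longrightarrow> x \<le> y \<longrightarrow> norm (integral {0..y} f - integral {0..x} f) < e"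
    proof (intro exI[of _ "max R 0"] allI impI)
      fix x y assume "max R 0 \<le> x" "x \<le> y"
      then show "norm (integral {0..y} f - integral {0..x} f) < e"
        using combine[of 0 x y] R[of x y] by simp
    qed
  qed
  then obtain Lp where Lp: "((\<lambda>x. integral {0..x} f) \<longlongrightarrow> Lp) at_top" by blast
  have "\<exists>Lm. ((\<lambda>x. integral {x..0} f) \<longlongrightarrow> Lm) at_bot"
  proof (rule cauchy_convergent_at_bot)
    fix e :: real assume "e > 0"
    then obtain R where R: "\<And>u v. u \<le> v \<Longrightarrow> v \<le> - R \<Longrightarrow> norm (integral {u..v} f) < e"
      using tails by blast
    show "\<exists>R. \<forall>x y. x \<le> y \<longrightarrow> y \<le> R \<longrightarrow> norm (integral {y..0} f - integral {x..0} f) < e"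
    proof (intro exI[of _ "min (- R) 0"] allI impI)
      fix x y assume "x \<le> y" "y \<le> min (- R) 0"
      then show "norm (integral {y..0} f - integral {x..0} f) < e"
        using combine[of x y 0] R[of x y] by (simp add: norm_minus_commute)
    qed
  qed
  then obtain Lm where Lm: "((\<lambda>x. integral {x..0} f) \<longlongrightarrow> Lm) at_bot" by blast
  have "((\<lambda>p. integral {fst p..0} f + integral {0..snd p} f) \<longlongrightarrow> Lm + Lp) (at_bot \<times>\<^sub>F at_top)"
    by (intro tendsto_add filterlim_compose[OF Lm filterlim_fst] filterlim_compose[OF Lp filterlim_snd])
  moreover have "\<forall>\<^sub>F p in at_bot \<times>\<^sub>F at_top.
      integral {fst p..0} f + integral {0..snd p} f = (\<lambda>(a, b). integral {a..b} f) p"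
    using eventually_prodI[OF eventually_le_at_bot[of 0] eventually_ge_at_top[of 0]]
  proof eventually_elim
    case (elim p)
    then show ?case using combine[of "fst p" 0 "snd p"] by (simp add: case_prod_beta)
  qed
  ultimately have "((\<lambda>(a, b). integral {a..b} f) \<longlongrightarrow> Lm + Lp) (at_bot \<times>\<^sub>F at_top)"
    by (rule Lim_transform_eventually)
  then show ?thesis unfolding improper_integral_R_def using int by blast
qed

lemma improper_integral_R_norm_le:
  fixes f :: "real \<Rightarrow> complex"
  assumes L: "improper_integral_R f L"
    and bound: "\<And>a b. a \<le> b \<Longrightarrow> norm (integral {a..b} f) \<le> B"
  shows "norm L \<le> B"
proof (rule tendsto_upperbound)
  show "((\<lambda>p. norm ((\<lambda>(a, b). integral {a..b} f) p)) \<longlongrightarrow> norm L) (at_bot \<times>\<^sub>F at_top)"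
    using L unfolding improper_integral_R_def by (intro tendsto_norm) blast
  show "\<forall>\<^sub>F p in at_bot \<times>\<^sub>F at_top. norm ((\<lambda>(a, b). integral {a..b} f) p) \<le> B"
    using eventually_prodI[OF eventually_le_at_bot[of 0] eventually_ge_at_top[of 0]]
    by eventually_elim (auto intro: bound)
qed (simp add: prod_filter_eq_bot)

text \<open>The choice \<open>\<delta> = t\<^sup>-\<^sup>(\<^sup>1\<^sup>+\<^sup>q\<^sup>)\<^sup>/\<^sup>(\<^sup>2\<^sup>+\<^sup>q\<^sup>)\<close> balances the van der Corput term \<open>1/(t\<delta>)\<close> against a
  sublevel length of order \<open>\<delta>\<^sup>1\<^sup>/\<^sup>(\<^sup>1\<^sup>+\<^sup>q\<^sup>)\<close>: both become \<open>t\<^sup>-\<^sup>1\<^sup>/\<^sup>(\<^sup>2\<^sup>+\<^sup>q\<^sup>)\<close>.\<close>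
lemma balanced_scale:
  fixes t q K :: real
  assumes t: "t > 0" and q: "q \<ge> 0"
  shows "8 / (t * t powr (- (1 + q) / (2 + q))) + K * (t powr (- (1 + q) / (2 + q))) powr (1 / (1 + q))
         = (8 + K) * t powr (- 1 / (2 + q))"
proof -
  have "t * t powr (- (1 + q) / (2 + q)) = t powr (1 + - (1 + q) / (2 + q))"
    using t by (simp add: powr_add)
  also have "1 + - (1 + q) / (2 + q) = 1 / (2 + q)" using q by (simp add: field_simps)
  finally have first: "8 / (t * t powr (- (1 + q) / (2 + q))) = 8 * t powr (- 1 / (2 + q))"
    by (simp add: powr_minus divide_inverse)
  have "1 + q \<noteq> 0" "2 + q \<noteq> 0" using q by auto
  then have "- (1 + q) / (2 + q) * (1 / (1 + q)) = - 1 / (2 + q)" by (simp add: divide_simps)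
  then have "(t powr (- (1 + q) / (2 + q))) powr (1 / (1 + q)) = t powr (- 1 / (2 + q))"
    by (simp add: powr_powr)
  with first show ?thesis by (simp add: algebra_simps)
qed

locale phase_assumptions =
  fixes h h' h'' :: "real \<Rightarrow> real" and q1 q2 C1 C2 :: real
  assumes d1: "\<And>x. (h has_real_derivative h' x) (at x)"
    and d2: "\<And>x. (h' has_real_derivative h'' x) (at x)"
    and fin: "finite {x. h'' x = 0}"
    and q1: "q1 > 0"
    and ord: "\<And>\<xi>. h'' \<xi> = 0 \<Longrightarrow>
               \<exists>a>0. \<exists>\<delta>>0. \<forall>x. \<bar>x - \<xi>\<bar> < \<delta> \<longrightarrow> \<bar>h'' x\<bar> \<ge> a * \<bar>x - \<xi>\<bar> powr q1"
    and C1: "C1 > 0" and C2: "C2 > 0" and q2: "q2 \<ge> 0"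
    and grow: "\<And>x. \<bar>x\<bar> \<ge> C1 \<Longrightarrow> \<bar>h'' x\<bar> \<ge> C2 * \<bar>x\<bar> powr q2"
begin

lemma h''_nonzero_far:
  assumes "\<bar>x\<bar> \<ge> C1" shows "h'' x \<noteq> 0"
proof -
  have "C2 * \<bar>x\<bar> powr q2 > 0" using assms C1 C2 by simp
  then show ?thesis using grow[OF assms] by auto
qed

text \<open>Far out, \<open>h'\<close> grows like \<open>|x|\<^sup>1\<^sup>+\<^sup>q\<^sup>2\<close>: integrate the bound on \<open>h''\<close> from \<open>\<plusminus>C\<^sub>1\<close>.\<close>
lemma h'_growth:
  assumes x: "\<bar>x\<bar> \<ge> C1"
  shows "C2 / (1 + q2) * (\<bar>x\<bar> - C1) powr (1 + q2) \<le> \<bar>h' x\<bar> + max \<bar>h' C1\<bar> \<bar>h' (- C1)\<bar>"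
proof -
  define z where "z = (if x \<ge> 0 then C1 else - C1)"
  have xz: "\<bar>x - z\<bar> = \<bar>x\<bar> - C1" and z: "\<bar>h' z\<bar> \<le> max \<bar>h' C1\<bar> \<bar>h' (- C1)\<bar>"
    using x C1 by (auto simp: z_def)
  have between: "C1 \<le> \<bar>u\<bar> \<and> \<bar>u - z\<bar> \<le> \<bar>u\<bar>" if "min z x < u" "u < max z x" for u
    using that x C1 by (auto simp: z_def min_def max_def split: if_splits)
  have "C2 / (1 + q2) * \<bar>x - z\<bar> powr (1 + q2) \<le> \<bar>h' x - h' z\<bar>"
  proof (rule power_increment[OF d2 q2])
    fix u assume "min z x < u" "u < max z x"
    then have u: "C1 \<le> \<bar>u\<bar>" "\<bar>u - z\<bar> \<le> \<bar>u\<bar>" using between by auto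
    show "h'' u \<noteq> 0" using h''_nonzero_far[OF u(1)] .
    have "C2 * \<bar>u - z\<bar> powr q2 \<le> C2 * \<bar>u\<bar> powr q2"
      using u(2) q2 C2 by (intro mult_left_mono powr_mono2) auto
    then show "C2 * \<bar>u - z\<bar> powr q2 \<le> \<bar>h'' u\<bar>" using grow[OF u(1)] by linarith
  qed
  then show ?thesis using xz z abs_triangle_ineq4[of "h' x" "h' z"] by simp
qed

lemma sublevel_points_large:
  "\<exists>K>0. \<forall>\<delta>\<ge>1. \<forall>x. \<bar>h' x\<bar> \<le> \<delta> \<longrightarrow> \<bar>x\<bar> \<le> K * \<delta> powr (1 / (1 + q2))"
proof -
  define r where "r = 1 / (1 + q2)"
  define B where "B = max \<bar>h' C1\<bar> \<bar>h' (- C1)\<bar>"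
  define P where "P = ((1 + q2) / C2) powr r * (1 + B) powr r"
  have B: "B \<ge> 0" unfolding B_def by simp
  have P: "P \<ge> 0" unfolding P_def by simp
  have "\<bar>x\<bar> \<le> (C1 + P) * \<delta> powr r" if \<delta>: "\<delta> \<ge> 1" and x: "\<bar>h' x\<bar> \<le> \<delta>" for \<delta> x
  proof -
    have root: "1 \<le> \<delta> powr r" unfolding r_def using \<delta> q2 by (intro ge_one_powr_ge_zero) auto
    then have C1_le: "C1 \<le> C1 * \<delta> powr r" using C1 by simp
    show ?thesis
    proof (cases "\<bar>x\<bar> \<ge> C1")
      case True
      have "C2 / (1 + q2) * (\<bar>x\<bar> - C1) powr (1 + q2) \<le> \<delta> + B"
        using h'_growth[OF True] x unfolding B_def by linarith
      also have "\<dots> \<le> (1 + B) * \<delta>" using B \<delta> mult_left_mono[of 1 \<delta> B] by (simp add: algebra_simps)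
      finally have "\<bar>x\<bar> - C1 \<le> (1 / (C2 / (1 + q2))) powr (1 / (1 + q2)) * ((1 + B) * \<delta>) powr (1 / (1 + q2))"
        using True C2 q2 by (intro root_of_power_bound) auto
      also have "\<dots> = P * \<delta> powr r"
        unfolding P_def r_def using B \<delta> by (simp add: powr_mult)
      finally show ?thesis using C1_le by (simp add: distrib_right)
    next
      case False
      have "0 \<le> P * \<delta> powr r" using P by simp
      then show ?thesis using False C1_le by (simp add: distrib_right)
    qed
  qed
  moreover have "C1 + P > 0" using C1 P by simp
  ultimately show ?thesis unfolding r_def by blast
qed

lemma sublevel_large:
  "\<exists>K>0. \<forall>\<delta> x y. 1 \<le> \<delta> \<longrightarrow> x \<le> y \<longrightarrow> (\<forall>w\<in>{x..y}. \<bar>h' w\<bar> \<le> \<delta>) \<longrightarrow>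
     y - x \<le> K * \<delta> powr (1 / (1 + q2))"
proof -
  obtain K where K: "K > 0" "\<And>\<delta> x. 1 \<le> \<delta> \<Longrightarrow> \<bar>h' x\<bar> \<le> \<delta> \<Longrightarrow> \<bar>x\<bar> \<le> K * \<delta> powr (1 / (1 + q2))"
    using sublevel_points_large by blast
  have "y - x \<le> (2 * K) * \<delta> powr (1 / (1 + q2))"
    if "1 \<le> \<delta>" "x \<le> y" "\<forall>w\<in>{x..y}. \<bar>h' w\<bar> \<le> \<delta>" for \<delta> x y
    using K(2)[of \<delta> x] K(2)[of \<delta> y] that by (auto simp: abs_le_iff)
  then show ?thesis using K(1) by (intro exI[of _ "2 * K"]) auto
qed

text \<open>At a zero of \<open>h'\<close>, \<open>|h'|\<close> grows at least like \<open>|w - z|\<^sup>1\<^sup>+\<^sup>q\<^sup>1\<close>: linearly if \<open>h''(z) \<noteq> 0\<close>,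
  and by integrating the order condition on \<open>h''\<close> if \<open>h''(z) = 0\<close>.\<close>
lemma h'_lower_bound_at_zero:
  assumes z: "h' z = 0"
  shows "\<exists>c>0. \<exists>\<rho>>0. \<forall>w. \<bar>w - z\<bar> < \<rho> \<longrightarrow> c * \<bar>w - z\<bar> powr (1 + q1) \<le> \<bar>h' w\<bar>"
proof (cases "h'' z = 0")
  case False
  obtain c \<rho> where c: "c > 0" "\<rho> > 0" and lin: "\<And>w. \<bar>w - z\<bar> < \<rho> \<Longrightarrow> c * \<bar>w - z\<bar> \<le> \<bar>h' w\<bar>"
    using simple_zero_lower_bound[OF d2 False z] by blast
  have "c * \<bar>w - z\<bar> powr (1 + q1) \<le> \<bar>h' w\<bar>" if "\<bar>w - z\<bar> < min \<rho> 1" for w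
  proof -
    have "\<bar>w - z\<bar> powr (1 + q1) \<le> \<bar>w - z\<bar> powr 1"
      using that q1 by (intro powr_mono') auto
    then have "c * \<bar>w - z\<bar> powr (1 + q1) \<le> c * \<bar>w - z\<bar>" using c by simp
    then show ?thesis using lin[of w] that by simp
  qed
  then show ?thesis using c by (intro exI[of _ c] conjI exI[of _ "min \<rho> 1"]) auto
next
  case True
  obtain a \<delta> where a: "a > 0" "\<delta> > 0"
    and order: "\<And>x. \<bar>x - z\<bar> < \<delta> \<Longrightarrow> a * \<bar>x - z\<bar> powr q1 \<le> \<bar>h'' x\<bar>"
    using ord[OF True] by blast
  obtain \<epsilon> where \<epsilon>: "\<epsilon> > 0" and isolated: "\<And>x. h'' x = 0 \<Longrightarrow> x \<noteq> z \<Longrightarrow> \<epsilon> \<le> dist z x"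
    using finite_set_avoid[OF fin, of z] by auto
  define \<rho> where "\<rho> = min \<delta> \<epsilon>"
  have "a / (1 + q1) * \<bar>w - z\<bar> powr (1 + q1) \<le> \<bar>h' w\<bar>" if w: "\<bar>w - z\<bar> < \<rho>" for w
  proof -
    have "a / (1 + q1) * \<bar>w - z\<bar> powr (1 + q1) \<le> \<bar>h' w - h' z\<bar>"
    proof (rule power_increment[OF d2])
      fix u assume "min z w < u" "u < max z w"
      then have u: "0 < \<bar>u - z\<bar>" "\<bar>u - z\<bar> < \<rho>" using w by (auto simp: min_def max_def split: if_splits)
      show "h'' u \<noteq> 0" using isolated[of u] u by (auto simp: \<rho>_def dist_real_def)
      show "a * \<bar>u - z\<bar> powr q1 \<le> \<bar>h'' u\<bar>" using order u by (simp add: \<rho>_def)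
    qed (use q1 in auto)
    then show ?thesis using z by simp
  qed
  moreover have "a / (1 + q1) > 0" "\<rho> > 0" using a q1 \<epsilon> by (auto simp: \<rho>_def)
  ultimately show ?thesis by blast
qed

lemma sublevel_local:
  "\<exists>\<rho>>0. \<exists>K. \<forall>\<delta>>0. \<forall>x y. x \<le> y \<longrightarrow> {x..y} \<subseteq> ball z \<rho> \<longrightarrow>
     (\<forall>w\<in>{x..y}. \<bar>h' w\<bar> \<le> \<delta>) \<longrightarrow> y - x \<le> K * \<delta> powr (1 / (1 + q1))"
proof (cases "h' z = 0")
  case True
  obtain c \<rho> where c: "c > 0" "\<rho> > 0"
    and lower: "\<And>w. \<bar>w - z\<bar> < \<rho> \<Longrightarrow> c * \<bar>w - z\<bar> powr (1 + q1) \<le> \<bar>h' w\<bar>"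
    using h'_lower_bound_at_zero[OF True] by blast
  have "y - x \<le> (2 * (1 / c) powr (1 / (1 + q1))) * \<delta> powr (1 / (1 + q1))"
    if "x \<le> y" "{x..y} \<subseteq> ball z \<rho>" "\<forall>w\<in>{x..y}. \<bar>h' w\<bar> \<le> \<delta>" for \<delta> x y
    using q1 by (intro sublevel_near_power_zero[OF c(1) _ lower that]) simp
  then show ?thesis using c(2) by blast
next
  case False
  show ?thesis by (rule sublevel_near_nonzero[OF DERIV_isCont[OF d2] False]) (use q1 in simp)
qed

text \<open>They lie in a fixed compact interval, where the local estimates hold
  uniformly for short intervals; a long interval contains a short one, which forces
  \<open>\<delta>\<close> to be bounded below.\<close>
lemma sublevel_small:
  "\<exists>K\<ge>0. \<forall>\<delta> x y. 0 < \<delta> \<longrightarrow> \<delta> \<le> 1 \<longrightarrow> x \<le> y \<longrightarrow> (\<forall>w\<in>{x..y}. \<bar>h' w\<bar> \<le> \<delta>) \<longrightarrow>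
     y - x \<le> K * \<delta> powr (1 / (1 + q1))"
proof -
  define s where "s = 1 / (1 + q1)"
  obtain R where R: "R > 0" and bounded: "\<And>x. \<bar>h' x\<bar> \<le> 1 \<Longrightarrow> \<bar>x\<bar> \<le> R"
    using sublevel_points_large by force
  obtain e K where e: "e > 0" and short: "\<And>\<delta> x y. \<delta> > 0 \<Longrightarrow> x \<in> {-R..R} \<Longrightarrow> x \<le> y \<Longrightarrow> y - x < e \<Longrightarrow>
      \<forall>w\<in>{x..y}. \<bar>h' w\<bar> \<le> \<delta> \<Longrightarrow> y - x \<le> K * \<delta> powr s"
    using compact_uniform_sublevel[OF compact_Icc sublevel_local] unfolding s_def by metis
  define K' where "K' = \<bar>K\<bar> * (1 + 4 * R / e)"
  have "y - x \<le> K' * \<delta> powr s"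
    if \<delta>: "0 < \<delta>" "\<delta> \<le> 1" and xy: "x \<le> y" and sub: "\<forall>w\<in>{x..y}. \<bar>h' w\<bar> \<le> \<delta>" for \<delta> x y
  proof -
    have in_R: "\<bar>w\<bar> \<le> R" if "w \<in> {x..y}" for w using bounded sub that \<delta> by force
    have K_abs: "K * \<delta> powr s \<le> \<bar>K\<bar> * \<delta> powr s" by (simp add: mult_right_mono)
    also have "\<dots> \<le> K' * \<delta> powr s"
      unfolding K'_def using mult_left_mono[of 1 "1 + 4 * R / e" "\<bar>K\<bar> * \<delta> powr s"] R e
      by (simp add: mult_ac)
    finally have K_le: "K * \<delta> powr s \<le> K' * \<delta> powr s" .
    show ?thesis
    proof (cases "y - x < e")
      case True
      then show ?thesis using short[OF \<delta>(1) _ xy True sub] in_R[of x] xy K_le by force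
    next
      case False
      txt \<open>The initial piece of length \<open>e/2\<close> is short, so \<open>e/2 \<le> K \<delta>\<^sup>s\<close>.\<close>
      have "e / 2 \<le> K * \<delta> powr s"
        using short[OF \<delta>(1), of x "x + e / 2"] in_R[of x] xy False e sub by force
      have "y - x \<le> 2 * R" using in_R[of x] in_R[of y] xy by auto
      also have "\<dots> = (4 * R / e) * (e / 2)" using e by simp
      also have "\<dots> \<le> (4 * R / e) * (\<bar>K\<bar> * \<delta> powr s)"
        using \<open>e / 2 \<le> K * \<delta> powr s\<close> K_abs R e by (intro mult_left_mono) auto
      also have "\<dots> \<le> K' * \<delta> powr s" unfolding K'_def by (simp add: algebra_simps)
      finally show ?thesis .
    qed
  qed
  moreover have "K' \<ge> 0" unfolding K'_def using R e by simp
  ultimately show ?thesis unfolding s_def by blast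
qed

text \<open>Bound on every compact interval in terms of a sublevel length bound \<open>L\<close> at level
  \<open>\<delta>\<close>: cut at the finitely many zeros of \<open>h''\<close> and apply the piecewise estimate.\<close>
lemma interval_bound:
  assumes t: "t > 0" and \<delta>: "\<delta> > 0" and L: "L \<ge> 0"
    and sublevel: "\<And>x y. x \<le> y \<Longrightarrow> \<forall>w\<in>{x..y}. \<bar>h' w\<bar> \<le> \<delta> \<Longrightarrow> y - x \<le> L"
    and ab: "a \<le> b"
  shows "norm (integral {a..b} (\<lambda>x. cis (t * h x)))
           \<le> (real (card {x. h'' x = 0}) + 1) * (8 / (t * \<delta>) + L)"
proof (rule bound_by_splitting[OF fin _ _ ab])
  show "integral {u..w} (\<lambda>x. cis (t * h x))
      = integral {u..v} (\<lambda>x. cis (t * h x)) + integral {v..w} (\<lambda>x. cis (t * h x))"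
    if "u \<le> v" "v \<le> w" for u v w
    using Henstock_Kurzweil_Integration.integral_combine[OF that cis_phase_integrable[OF d1]] ..
  fix u v :: real assume uv: "u \<le> v" and "{x. h'' x = 0} \<inter> {u<..<v} = {}"
  then have "(\<forall>x\<in>{u..v}. h'' x \<ge> 0) \<or> (\<forall>x\<in>{u..v}. h'' x \<le> 0)"
    by (intro derivative_sign_on_interval[OF d2]) auto
  then show "norm (integral {u..v} (\<lambda>x. cis (t * h x))) \<le> 8 / (t * \<delta>) + L"
    using sublevel by (intro oscillatory_piece[OF d1 d2 t \<delta> uv L]) auto
qed

text \<open>Integrals over intervals far from the origin are small: there \<open>h''\<close> has a fixed
  sign and \<open>|h'|\<close> is large, so van der Corput applies.\<close>
lemma small_tails:
  assumes t: "t > 0" and e: "e > 0"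
  shows "\<exists>R. \<forall>u v. (R \<le> u \<and> u \<le> v \<or> u \<le> v \<and> v \<le> - R) \<longrightarrow>
           norm (integral {u..v} (\<lambda>x. cis (t * h x))) < e"
proof -
  define \<delta> where "\<delta> = 1 + 4 / (t * e)"
  have \<delta>1: "\<delta> \<ge> 1" unfolding \<delta>_def using t e by simp
  have "t * \<delta> = t + 4 / e" unfolding \<delta>_def using t e by (simp add: field_simps)
  then have "4 < e * (t * \<delta>)" using t e by (simp add: distrib_left)
  moreover have "t * \<delta> > 0" using t \<delta>1 by simp
  ultimately have \<delta>: "\<delta> \<ge> 1" "4 / (t * \<delta>) < e"
    using \<delta>1 by (auto simp: divide_less_eq mult.commute)
  obtain K where K: "\<And>x. \<bar>h' x\<bar> \<le> \<delta> \<Longrightarrow> \<bar>x\<bar> \<le> K * \<delta> powr (1 / (1 + q2))"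
    using sublevel_points_large \<delta>(1) by blast
  define R where "R = max C1 (K * \<delta> powr (1 / (1 + q2)) + 1)"
  have big: "\<delta> \<le> \<bar>h' x\<bar>" if "R \<le> \<bar>x\<bar>" for x
    using K[of x] that unfolding R_def by fastforce
  have "norm (integral {u..v} (\<lambda>x. cis (t * h x))) \<le> 4 / (t * \<delta>)"
    if "R \<le> u \<and> u \<le> v \<or> u \<le> v \<and> v \<le> - R" for u v
  proof (rule van_der_corput[OF d1 d2 t _ _ _ big])
    show "(\<forall>x\<in>{u..v}. h'' x \<ge> 0) \<or> (\<forall>x\<in>{u..v}. h'' x \<le> 0)"
    proof (rule derivative_sign_on_interval[OF d2])
      fix x assume "u < x" "x < v"
      then have "C1 \<le> \<bar>x\<bar>" using that unfolding R_def by auto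
      then show "h'' x \<noteq> 0" by (rule h''_nonzero_far)
    qed
  qed (use that \<delta> R_def in auto)
  then show ?thesis using \<delta>(2) by (meson order_le_less_trans)
qed

lemma decay_at_balanced_level:
  assumes t: "t > 0" and q: "q \<ge> 0" and K: "K \<ge> 0"
    and sublevel: "\<And>x y. x \<le> y \<Longrightarrow> \<forall>w\<in>{x..y}. \<bar>h' w\<bar> \<le> t powr (- (1 + q) / (2 + q)) \<Longrightarrow>
                     y - x \<le> K * (t powr (- (1 + q) / (2 + q))) powr (1 / (1 + q))"
    and ab: "a \<le> b"
  shows "norm (integral {a..b} (\<lambda>x. cis (t * h x)))
           \<le> (real (card {x. h'' x = 0}) + 1) * (8 + K) * t powr (- 1 / (2 + q))"
proof -
  have "norm (integral {a..b} (\<lambda>x. cis (t * h x)))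
      \<le> (real (card {x. h'' x = 0}) + 1) * (8 / (t * t powr (- (1 + q) / (2 + q)))
          + K * (t powr (- (1 + q) / (2 + q))) powr (1 / (1 + q)))"
    by (rule interval_bound[OF t _ _ sublevel ab]) (use t K in auto)
  then show ?thesis unfolding balanced_scale[OF t q] by (simp add: mult.assoc)
qed

lemma interval_integral_decay:
  "\<exists>C. \<forall>t a b. 0 < t \<longrightarrow> a \<le> b \<longrightarrow> norm (integral {a..b} (\<lambda>x. cis (t * h x)))
      \<le> C * t powr (- 1 / (2 + (if t < 1 then q2 else q1)))"
proof -
  obtain K1 where K1: "K1 \<ge> 0" and small: "\<And>\<delta> x y. 0 < \<delta> \<Longrightarrow> \<delta> \<le> 1 \<Longrightarrow> x \<le> y \<Longrightarrow>
      \<forall>w\<in>{x..y}. \<bar>h' w\<bar> \<le> \<delta> \<Longrightarrow> y - x \<le> K1 * \<delta> powr (1 / (1 + q1))"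
    using sublevel_small by blast
  obtain K2 where K2: "K2 > 0" and large: "\<And>\<delta> x y. 1 \<le> \<delta> \<Longrightarrow> x \<le> y \<Longrightarrow>
      \<forall>w\<in>{x..y}. \<bar>h' w\<bar> \<le> \<delta> \<Longrightarrow> y - x \<le> K2 * \<delta> powr (1 / (1 + q2))"
    using sublevel_large by blast
  define N where "N = real (card {x. h'' x = 0}) + 1"
  have "norm (integral {a..b} (\<lambda>x. cis (t * h x)))
      \<le> N * (8 + K1 + K2) * t powr (- 1 / (2 + (if t < 1 then q2 else q1)))"
    if t: "t > 0" and ab: "a \<le> b" for t a b
  proof (cases "t < 1")
    case True
    have "1 \<le> t powr (- (1 + q2) / (2 + q2))"
      using True t q2 powr_less_mono2_neg[of "- (1 + q2) / (2 + q2)" t 1]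
      by (simp add: divide_neg_pos less_imp_le)
    then have "norm (integral {a..b} (\<lambda>x. cis (t * h x))) \<le> N * (8 + K2) * t powr (- 1 / (2 + q2))"
      unfolding N_def using K2 large by (intro decay_at_balanced_level[OF t q2 _ _ ab]) auto
    also have "\<dots> \<le> N * (8 + K1 + K2) * t powr (- 1 / (2 + q2))"
      unfolding N_def using K1 by (intro mult_right_mono mult_left_mono) auto
    finally show ?thesis using True by simp
  next
    case False
    have "t powr (- (1 + q1) / (2 + q1)) \<le> t powr 0"
      using False q1 by (intro powr_mono) (auto simp: divide_nonpos_pos)
    then have "t powr (- (1 + q1) / (2 + q1)) \<le> 1" using t by simp
    then have "norm (integral {a..b} (\<lambda>x. cis (t * h x))) \<le> N * (8 + K1) * t powr (- 1 / (2 + q1))"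
      unfolding N_def using K1 small t q1
      by (intro decay_at_balanced_level[OF t _ _ _ ab]) auto
    also have "\<dots> \<le> N * (8 + K1 + K2) * t powr (- 1 / (2 + q1))"
      unfolding N_def using K2 by (intro mult_right_mono mult_left_mono) auto
    finally show ?thesis using False by simp
  qed
  then show ?thesis by blast
qed

end

theorem mainTheorem8:
  fixes h h' h'' :: "real \<Rightarrow> real" and q1 q2 C1 C2 :: real
  assumes d1: "\<And>x. (h has_real_derivative h' x) (at x)"
    and d2: "\<And>x. (h' has_real_derivative h'' x) (at x)"
    and fin: "finite {x. h'' x = 0}"
    and q1: "q1 > 0"
    and ord: "\<And>\<xi>. h'' \<xi> = 0 \<Longrightarrow>
               \<exists>a>0. \<exists>\<delta>>0. \<forall>x. \<bar>x - \<xi>\<bar> < \<delta> \<longrightarrow> \<bar>h'' x\<bar> \<ge> a * \<bar>x - \<xi>\<bar> powr q1"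
    and C1: "C1 > 0" and C2: "C2 > 0" and q2: "q2 \<ge> 0"
    and grow: "\<And>x. \<bar>x\<bar> \<ge> C1 \<Longrightarrow> \<bar>h'' x\<bar> \<ge> C2 * \<bar>x\<bar> powr q2"
  shows "\<exists>C. \<forall>t>0. \<exists>L. improper_integral_R (\<lambda>x. cis (t * h x)) L \<and>
            (t < 1 \<longrightarrow> norm L \<le> C * t powr (-1 / (2 + q2))) \<and>
            (t \<ge> 1 \<longrightarrow> norm L \<le> C * t powr (-1 / (2 + q1)))"
proof -
  interpret phase_assumptions h h' h'' q1 q2 C1 C2
    using assms by unfold_locales
  obtain C where C: "\<And>t a b. 0 < t \<Longrightarrow> a \<le> b \<Longrightarrow> norm (integral {a..b} (\<lambda>x. cis (t * h x)))
      \<le> C * t powr (- 1 / (2 + (if t < 1 then q2 else q1)))"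
    using interval_integral_decay by blast
  have "\<exists>L. improper_integral_R (\<lambda>x. cis (t * h x)) L \<and>
            (t < 1 \<longrightarrow> norm L \<le> C * t powr (-1 / (2 + q2))) \<and>
            (t \<ge> 1 \<longrightarrow> norm L \<le> C * t powr (-1 / (2 + q1)))" if t: "t > 0" for t
  proof -
    obtain L where L: "improper_integral_R (\<lambda>x. cis (t * h x)) L"
      using improper_integral_R_exists[OF cis_phase_integrable[OF d1] small_tails[OF t]] by blast
    have "norm L \<le> C * t powr (- 1 / (2 + (if t < 1 then q2 else q1)))"
      by (rule improper_integral_R_norm_le[OF L C[OF t]])
    with L show ?thesis by auto
  qed
  then show ?thesis by blast
qed

end
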